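(* For each $n\in\mathbb N$ let $X_n=\{x_1^n,x_2^n\}$ be a two-point set with metric $d_n(x_1^n,x_2^n)=n$, and put $\alpha_n=\tfrac12$ if $n$ is even, $\alpha_n=\tfrac13$ if $n$ is odd. Define $M_n(x_i^n,x_j^n,0)=0$ and, for $t>0$, $M_n(x_i^n,x_j^n,t)=\alpha_n$ if $t\le d_n(x_i^n,x_j^n)$ and $M_n(x_i^n,x_j^n,t)=1$ if $t>d_n(x_i^n,x_j^n)$. Then each $(X_n,M_n,\cdot)$ (product $t$-norm) is a compact non-Archimedean fuzzy metric space, and the sequence $\{(X_n,M_n,\cdot)\}_n$ satisfies: (1) the constant function $C(s)=\tfrac13$ satisfies $0<C(s)\le\mathrm{diam}_s(X_n)$ for all $s>0$, $n\in\mathbb N$; (2) $\mathrm{Cov}(X_n,\varepsilon,t)\le 2$ for all $t>0$, $0<\varepsilon<1$, $n$; (3) for $t=\tfrac12$ and any $n,m$ with $n=2m$ and any $s$ with $m<s<n$, one has $M_n(x_1^n,x_2^n,s)<M_m(x_1^m,x_2^m,s)$ but $\dfrac{M_n(x_1^n,x_2^n,s)}{M_m(x_1^m,x_2^m,s)}<\dfrac{M_n(x_1^n,x_2^n,t)}{M_m(x_1^m,x_2^m,t)}$; and (4) $\{(X_n,M_n,\cdot)\}_n$ has no subsequence that is Cauchy with respect to $M_{GH}$.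
   Context: A fuzzy metric space $(X,M,\cdot)$ with the product $t$-norm: $M:X\times X\times[0,\infty)\to[0,1]$ with, for all $x,y,z$ and $t,s>0$: (KM1) $M(x,y,0)=0$; (KM2) $M(x,y,t)=1$ for all $t>0$ iff $x=y$; (KM3) symmetry; (KM4) $M(x,y,t)\cdot M(y,z,s)\le M(x,z,t+s)$; (KM5) $M(x,y,\cdot)$ left continuous on $[0,\infty)$. Non-Archimedean: $M(x,z,\max\{t,s\})\ge M(x,y,t)\cdot M(y,z,s)$. Balls $B(x,\varepsilon,t)=\{y: M(x,y,t)>1-\varepsilon\}$ generate the topology. $H_M(A,B,t)=\min\{\inf_{a\in A}\sup_{b\in B}M(a,b,t),\ \inf_{b\in B}\sup_{a\in A}M(a,b,t)\}$. A fuzzy metric on $X\sqcup Y$ is admissible if it restricts to the given ones on $X$ and $Y$; $M_{GH}(X,Y,t)=\sup\{H_M(X,Y,t): M$ admissible non-Archimedean fuzzy metric on $X\sqcup Y$ with the product $t$-norm$\}$. A sequence $(X_n)$ is Cauchy w.r.t. $M_{GH}$ if for every $t>0$, $0<\varepsilon<1$ there is $n_0$ with $M_{GH}(X_n,X_m,t)>1-\varepsilon$ for all $n,m\ge n_0$. $\mathrm{Cov}(X,\varepsilon,t)$ is the minimal cardinality of $C\subseteq X$ with $X=\bigcup_{c\in C}B(c,\varepsilon,t)$; $\mathrm{diam}_s(X)=\inf\{M(x,y,s):x,y\in X\}$. *)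

theory Defs
  imports Complex_Main "HOL-Library.Extended_Nat"
begin

type_synonym 'a fuzzy = "'a \<Rightarrow> 'a \<Rightarrow> real \<Rightarrow> real"

text \<open>Kramosil--Michalek fuzzy metric with the product t-norm on the carrier X.\<close>
definition fuzzy_metric :: "'a set \<Rightarrow> 'a fuzzy \<Rightarrow> bool" where
  "fuzzy_metric X M \<longleftrightarrow>
     (\<forall>x\<in>X. \<forall>y\<in>X. \<forall>t\<ge>0. 0 \<le> M x y t \<and> M x y t \<le> 1)
   \<and> (\<forall>x\<in>X. \<forall>y\<in>X. M x y 0 = 0)
   \<and> (\<forall>x\<in>X. \<forall>y\<in>X. (\<forall>t>0. M x y t = 1) \<longleftrightarrow> x = y)
   \<and> (\<forall>x\<in>X. \<forall>y\<in>X. \<forall>t. M x y t = M y x t)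
   \<and> (\<forall>x\<in>X. \<forall>y\<in>X. \<forall>z\<in>X. \<forall>t>0. \<forall>s>0. M x y t * M y z s \<le> M x z (t + s))
   \<and> (\<forall>x\<in>X. \<forall>y\<in>X. \<forall>t>0. (M x y \<longlongrightarrow> M x y t) (at_left t))"

definition fm_non_arch :: "'a set \<Rightarrow> 'a fuzzy \<Rightarrow> bool" where
  "fm_non_arch X M \<longleftrightarrow>
     (\<forall>x\<in>X. \<forall>y\<in>X. \<forall>z\<in>X. \<forall>t>0. \<forall>s>0. M x y t * M y z s \<le> M x z (max t s))"

definition fm_ball :: "'a set \<Rightarrow> 'a fuzzy \<Rightarrow> 'a \<Rightarrow> real \<Rightarrow> real \<Rightarrow> 'a set" where
  "fm_ball X M x \<epsilon> t = {y\<in>X. M x y t > 1 - \<epsilon>}"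

definition fm_open :: "'a set \<Rightarrow> 'a fuzzy \<Rightarrow> 'a set \<Rightarrow> bool" where
  "fm_open X M U \<longleftrightarrow> U \<subseteq> X \<and>
     (\<forall>x\<in>U. \<exists>\<epsilon> t. 0 < \<epsilon> \<and> \<epsilon> < 1 \<and> 0 < t \<and> fm_ball X M x \<epsilon> t \<subseteq> U)"

definition fm_compact :: "'a set \<Rightarrow> 'a fuzzy \<Rightarrow> bool" where
  "fm_compact X M \<longleftrightarrow>
     (\<forall>\<U>. (\<forall>U\<in>\<U>. fm_open X M U) \<and> X \<subseteq> \<Union>\<U> \<longrightarrow>
        (\<exists>\<F>\<subseteq>\<U>. finite \<F> \<and> X \<subseteq> \<Union>\<F>))"

definition fm_Cov :: "'a set \<Rightarrow> 'a fuzzy \<Rightarrow> real \<Rightarrow> real \<Rightarrow> enat" where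
  "fm_Cov X M \<epsilon> t =
     (INF C\<in>{C. C \<subseteq> X \<and> X = (\<Union>c\<in>C. fm_ball X M c \<epsilon> t)}.
        if finite C then enat (card C) else \<infinity>)"

definition fm_diam :: "'a set \<Rightarrow> 'a fuzzy \<Rightarrow> real \<Rightarrow> real" where
  "fm_diam X M s = (INF p\<in>X \<times> X. M (fst p) (snd p) s)"

definition fm_hausdorff :: "'a fuzzy \<Rightarrow> 'a set \<Rightarrow> 'a set \<Rightarrow> real \<Rightarrow> real" where
  "fm_hausdorff M A B t =
     min (INF a\<in>A. SUP b\<in>B. M a b t) (INF b\<in>B. SUP a\<in>A. M a b t)"

definition fm_admissible ::
  "'a set \<Rightarrow> 'a fuzzy \<Rightarrow> 'b set \<Rightarrow> 'b fuzzy \<Rightarrow> ('a + 'b) fuzzy \<Rightarrow> bool" where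
  "fm_admissible X MX Y MY M \<longleftrightarrow>
     fuzzy_metric (Inl ` X \<union> Inr ` Y) M \<and> fm_non_arch (Inl ` X \<union> Inr ` Y) M
   \<and> (\<forall>a\<in>X. \<forall>b\<in>X. \<forall>t\<ge>0. M (Inl a) (Inl b) t = MX a b t)
   \<and> (\<forall>a\<in>Y. \<forall>b\<in>Y. \<forall>t\<ge>0. M (Inr a) (Inr b) t = MY a b t)"

text \<open>Supremum taken in [0,1] (so the empty supremum is 0).\<close>
definition M_GH :: "'a set \<Rightarrow> 'a fuzzy \<Rightarrow> 'b set \<Rightarrow> 'b fuzzy \<Rightarrow> real \<Rightarrow> real" where
  "M_GH X MX Y MY t =
     Sup (insert 0 {fm_hausdorff M (Inl ` X) (Inr ` Y) t | M. fm_admissible X MX Y MY M})"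

definition GH_Cauchy :: "(nat \<Rightarrow> 'a set \<times> 'a fuzzy) \<Rightarrow> bool" where
  "GH_Cauchy S \<longleftrightarrow>
     (\<forall>t>0. \<forall>\<epsilon>. 0 < \<epsilon> \<and> \<epsilon> < 1 \<longrightarrow>
        (\<exists>n0. \<forall>n\<ge>n0. \<forall>m\<ge>n0.
           M_GH (fst (S n)) (snd (S n)) (fst (S m)) (snd (S m)) t > 1 - \<epsilon>))"

text \<open>The example: X_n = {x_1^n, x_2^n} represented as {1,2}, d_n(x_1,x_2) = n.\<close>
definition alpha :: "nat \<Rightarrow> real" where
  "alpha n = (if even n then 1/2 else 1/3)"

definition Xn :: "nat \<Rightarrow> nat set" where
  "Xn n = {1, 2}"

definition dn :: "nat \<Rightarrow> nat \<Rightarrow> nat \<Rightarrow> real" where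
  "dn n i j = (if i = j then 0 else real n)"

definition Mn :: "nat \<Rightarrow> nat fuzzy" where
  "Mn n i j t = (if t \<le> 0 then 0 else if t \<le> dn n i j then alpha n else 1)"

end

theory Submission
  imports Defs "HOL-Analysis.Abstract_Metric_Spaces"
begin

text \<open>
  \<open>M\<^sub>n\<close> takes the value \<open>\<alpha>\<^sub>n\<close> up to the distance \<open>d\<^sub>n\<close> and 1 beyond it; since \<open>d\<^sub>n\<close> is an
  ultrametric this is a non-Archimedean fuzzy metric, and the diameter and covering bounds
  are immediate. For the last claim let \<open>a < b\<close> and let \<open>M\<close> be an admissible non-Archimedean
  fuzzy metric on \<open>X\<^sub>a \<squnion> X\<^sub>b\<close> with \<open>H\<^sub>M(X\<^sub>a, X\<^sub>b, 1) > 3/4\<close>. Then each point of \<open>X\<^sub>b\<close> is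
  \<open>3/4\<close>-close to a point of \<open>X\<^sub>a\<close> at time 1, hence also at time \<open>b\<close>, because non-Archimedean
  fuzzy metrics are nondecreasing in time. As \<open>M\<^sub>a(p, q, b) = 1\<close> for all \<open>p, q \<in> X\<^sub>a\<close>, the
  non-Archimedean inequality gives \<open>M\<^sub>b(x\<^sub>1, x\<^sub>2, b) > (3/4)\<^sup>2 > 1/2 \<ge> \<alpha>\<^sub>b\<close>, a contradiction.
  So \<open>M_GH(X\<^sub>a, X\<^sub>b, 1) \<le> 3/4\<close> whenever \<open>a < b\<close>, and no subsequence is Cauchy.
\<close>

lemma fuzzy_metric_refl: "fuzzy_metric X M \<Longrightarrow> x \<in> X \<Longrightarrow> 0 < t \<Longrightarrow> M x x t = 1"
  unfolding fuzzy_metric_def by blast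

lemma fuzzy_metric_sym: "fuzzy_metric X M \<Longrightarrow> x \<in> X \<Longrightarrow> y \<in> X \<Longrightarrow> M x y t = M y x t"
  unfolding fuzzy_metric_def by blast

lemma fm_non_arch_same_time:
  "fm_non_arch X M \<Longrightarrow> x \<in> X \<Longrightarrow> y \<in> X \<Longrightarrow> z \<in> X \<Longrightarrow> 0 < t \<Longrightarrow>
    M x y t * M y z t \<le> M x z t"
  unfolding fm_non_arch_def by (metis max.idem)

lemma fm_non_arch_mono:
  assumes "fuzzy_metric X M" "fm_non_arch X M" "x \<in> X" "y \<in> X" "0 < t" "t \<le> s"
  shows "M x y t \<le> M x y s"
proof -
  have "0 < s"
    using assms by linarith
  then have "M x y t * M y y s \<le> M x y (max t s)"
    using assms(2-5) unfolding fm_non_arch_def by blast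
  moreover have "M y y s = 1"
    using assms \<open>0 < s\<close> by (intro fuzzy_metric_refl)
  ultimately show ?thesis
    using \<open>t \<le> s\<close> by (simp add: max_absorb2)
qed

lemma finite_imp_fm_compact: "finite X \<Longrightarrow> fm_compact X M"
  unfolding fm_compact_def
proof (intro allI impI)
  fix \<U> assume "finite X" "(\<forall>U\<in>\<U>. fm_open X M U) \<and> X \<subseteq> \<Union>\<U>"
  then have "\<forall>x\<in>X. \<exists>U. U \<in> \<U> \<and> x \<in> U"
    by blast
  then obtain U where "\<forall>x\<in>X. U x \<in> \<U> \<and> x \<in> U x"
    by (rule bchoice[THEN exE])
  with \<open>finite X\<close> show "\<exists>\<F>\<subseteq>\<U>. finite \<F> \<and> X \<subseteq> \<Union>\<F>"
    by (intro exI[of _ "U ` X"]) auto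
qed

lemma fm_Cov_le_card:
  assumes "fuzzy_metric X M" "finite X" "0 < \<epsilon>" "0 < t"
  shows "fm_Cov X M \<epsilon> t \<le> enat (card X)"
proof -
  have "X = (\<Union>c\<in>X. fm_ball X M c \<epsilon> t)"
    using assms fuzzy_metric_refl[OF assms(1)] by (auto simp: fm_ball_def)
  then have "fm_Cov X M \<epsilon> t \<le> (if finite X then enat (card X) else \<infinity>)"
    unfolding fm_Cov_def by (intro INF_lower) blast
  with \<open>finite X\<close> show ?thesis by simp
qed

definition threshold_fuzzy :: "real \<Rightarrow> ('a \<Rightarrow> 'a \<Rightarrow> real) \<Rightarrow> 'a fuzzy" where
  "threshold_fuzzy \<alpha> d x y t = (if t \<le> 0 then 0 else if t \<le> d x y then \<alpha> else 1)"

lemma threshold_fuzzy_range: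
  "0 \<le> \<alpha> \<Longrightarrow> \<alpha> \<le> 1 \<Longrightarrow> 0 \<le> threshold_fuzzy \<alpha> d x y t \<and> threshold_fuzzy \<alpha> d x y t \<le> 1"
  by (simp add: threshold_fuzzy_def)

lemma threshold_fuzzy_left_continuous:
  assumes "0 < t"
  shows "(threshold_fuzzy \<alpha> d x y \<longlongrightarrow> threshold_fuzzy \<alpha> d x y t) (at_left t)"
proof (rule tendsto_eventually)
  show "\<forall>\<^sub>F u in at_left t. threshold_fuzzy \<alpha> d x y u = threshold_fuzzy \<alpha> d x y t"
  proof (cases "t \<le> d x y")
    case True
    have "\<forall>\<^sub>F u in at_left t. u \<in> {0<..<t}"
      using assms by (rule eventually_at_left_real)
    then show ?thesis
      by eventually_elim (use True assms in \<open>auto simp: threshold_fuzzy_def\<close>)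
  next
    case False
    have "\<forall>\<^sub>F u in at_left t. u \<in> {max 0 (d x y)<..<t}"
      using False assms by (intro eventually_at_left_real) simp
    then show ?thesis
      by eventually_elim (use False assms in \<open>auto simp: threshold_fuzzy_def\<close>)
  qed
qed

lemma (in Metric_space) fuzzy_metric_threshold_fuzzy:
  assumes "0 \<le> \<alpha>" "\<alpha> < 1"
  shows "fuzzy_metric M (threshold_fuzzy \<alpha> d)"
  unfolding fuzzy_metric_def
proof (intro conjI ballI allI impI)
  fix x y z and t s :: real
  assume "x \<in> M" "y \<in> M" "z \<in> M" "0 < t" "0 < s"
  let ?F = "threshold_fuzzy \<alpha> d"
  show "?F x y t * ?F y z s \<le> ?F x z (t + s)"
  proof (cases "t + s \<le> d x z")
    case True
    moreover have "d x z \<le> d x y + d y z"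
      using \<open>x \<in> M\<close> \<open>y \<in> M\<close> \<open>z \<in> M\<close> by (rule triangle)
    ultimately have "t \<le> d x y \<or> s \<le> d y z"
      by linarith
    with True assms \<open>0 < t\<close> \<open>0 < s\<close> show ?thesis
      by (auto simp: threshold_fuzzy_def mult_left_le)
  next
    case False
    with \<open>0 < t\<close> \<open>0 < s\<close> have "?F x z (t + s) = 1"
      by (auto simp: threshold_fuzzy_def)
    with assms show ?thesis
      using threshold_fuzzy_range[of \<alpha> d] by (simp add: mult_le_one)
  qed
next
  fix x y assume "x \<in> M" "y \<in> M"
  show "(\<forall>t>0. threshold_fuzzy \<alpha> d x y t = 1) \<longleftrightarrow> x = y"
  proof
    assume "\<forall>t>0. threshold_fuzzy \<alpha> d x y t = 1"
    then have "\<not> 0 < d x y"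
      using assms by (auto simp: threshold_fuzzy_def dest: spec[of _ "d x y"])
    then show "x = y"
      using \<open>x \<in> M\<close> \<open>y \<in> M\<close> nonneg[of x y] by auto
  qed (use \<open>y \<in> M\<close> zero[of y y] in \<open>simp add: threshold_fuzzy_def\<close>)
next
  fix x y and t :: real
  assume "0 < t"
  then show "(threshold_fuzzy \<alpha> d x y \<longlongrightarrow> threshold_fuzzy \<alpha> d x y t) (at_left t)"
    by (rule threshold_fuzzy_left_continuous)
qed (use assms in \<open>auto simp: threshold_fuzzy_def commute\<close>)

lemma fm_non_arch_threshold_fuzzy:
  assumes "0 \<le> \<alpha>" "\<alpha> \<le> 1"
    and ultra: "\<And>x y z. x \<in> X \<Longrightarrow> y \<in> X \<Longrightarrow> z \<in> X \<Longrightarrow> d x z \<le> max (d x y) (d y z)"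
  shows "fm_non_arch X (threshold_fuzzy \<alpha> d)"
  unfolding fm_non_arch_def
proof (intro ballI allI impI)
  fix x y z and t s :: real
  assume "x \<in> X" "y \<in> X" "z \<in> X" "0 < t" "0 < s"
  let ?F = "threshold_fuzzy \<alpha> d"
  show "?F x y t * ?F y z s \<le> ?F x z (max t s)"
  proof (cases "max t s \<le> d x z")
    case True
    moreover have "d x z \<le> max (d x y) (d y z)"
      using \<open>x \<in> X\<close> \<open>y \<in> X\<close> \<open>z \<in> X\<close> by (rule ultra)
    ultimately have "t \<le> d x y \<or> s \<le> d y z"
      by linarith
    with True assms \<open>0 < t\<close> \<open>0 < s\<close> show ?thesis
      by (auto simp: threshold_fuzzy_def mult_left_le)
  next
    case False
    with \<open>0 < t\<close> have "?F x z (max t s) = 1"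
      by (auto simp: threshold_fuzzy_def)
    with assms show ?thesis
      using threshold_fuzzy_range[of \<alpha> d] by (simp add: mult_le_one)
  qed
qed

lemma threshold_fuzzy_diam_ge:
  assumes "0 < s" "X \<noteq> {}" "\<alpha> \<le> 1"
  shows "\<alpha> \<le> fm_diam X (threshold_fuzzy \<alpha> d) s"
  unfolding fm_diam_def
  using assms by (intro cINF_greatest) (auto simp: threshold_fuzzy_def)

lemma fm_hausdorff_gt_imp_near:
  assumes "c < fm_hausdorff M A B t" "A \<noteq> {}" "finite B" "b \<in> B"
  shows "\<exists>a\<in>A. c < M a b t"
proof -
  have "(INF b\<in>B. SUP a\<in>A. M a b t) \<le> (SUP a\<in>A. M a b t)"
    using assms(3,4) by (intro cINF_lower bdd_below_finite finite_imageI)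
  then have "fm_hausdorff M A B t \<le> (SUP a\<in>A. M a b t)"
    unfolding fm_hausdorff_def by linarith
  with assms(1) have "c < (SUP a\<in>A. M a b t)"
    by linarith
  with assms(2) show ?thesis
    using less_cSupD[of "(\<lambda>a. M a b t) ` A" c] by blast
qed

text \<open>
  As \<open>X\<close> has diameter 1 at time \<open>s\<close>, a point of \<open>Y\<close> that is \<open>c\<close>-close to some point of
  \<open>X\<close> is \<open>c\<close>-close to all of them, so \<open>y\<^sub>1\<close> and \<open>y\<^sub>2\<close> cannot both be close to \<open>X\<close>.
\<close>
lemma fm_hausdorff_le_of_far_pair:
  assumes adm: "fm_admissible X MX Y MY M"
    and "X \<noteq> {}" "finite Y" "0 < t" "t \<le> s"
    and diam_X: "\<forall>p\<in>X. \<forall>q\<in>X. MX p q s = 1"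
    and "y\<^sub>1 \<in> Y" "y\<^sub>2 \<in> Y" "0 \<le> c" "MY y\<^sub>1 y\<^sub>2 s \<le> c * c"
  shows "fm_hausdorff M (Inl ` X) (Inr ` Y) t \<le> c"
proof (rule ccontr)
  let ?Z = "Inl ` X \<union> Inr ` Y"
  assume "\<not> ?thesis"
  then have far: "c < fm_hausdorff M (Inl ` X) (Inr ` Y) t"
    by simp
  have fm: "fuzzy_metric ?Z M" and na: "fm_non_arch ?Z M"
    using adm by (simp_all add: fm_admissible_def)
  have "0 < s"
    using \<open>0 < t\<close> \<open>t \<le> s\<close> by linarith
  have near: "\<exists>p\<in>X. c < M (Inr y) (Inl p) s" if "y \<in> Y" for y
  proof -
    obtain p where "p \<in> X" "c < M (Inl p) (Inr y) t"
      using fm_hausdorff_gt_imp_near[OF far] \<open>X \<noteq> {}\<close> \<open>finite Y\<close> \<open>y \<in> Y\<close> by blast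
    moreover have "M (Inl p) (Inr y) t \<le> M (Inl p) (Inr y) s"
      using fm_non_arch_mono[OF fm na] \<open>p \<in> X\<close> \<open>y \<in> Y\<close> \<open>0 < t\<close> \<open>t \<le> s\<close> by blast
    moreover have "M (Inl p) (Inr y) s = M (Inr y) (Inl p) s"
      using fuzzy_metric_sym[OF fm] \<open>p \<in> X\<close> \<open>y \<in> Y\<close> by blast
    ultimately show ?thesis
      by (metis less_le_trans)
  qed
  obtain p where p: "p \<in> X" "c < M (Inr y\<^sub>1) (Inl p) s"
    using near \<open>y\<^sub>1 \<in> Y\<close> by blast
  obtain q where q: "q \<in> X" "c < M (Inr y\<^sub>2) (Inl q) s"
    using near \<open>y\<^sub>2 \<in> Y\<close> by blast
  have "M (Inl p) (Inl q) s = 1"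
    using adm diam_X p q \<open>0 < s\<close> by (simp add: fm_admissible_def)
  then have "M (Inr y\<^sub>1) (Inl p) s \<le> M (Inr y\<^sub>1) (Inl q) s"
    using fm_non_arch_same_time[OF na, of "Inr y\<^sub>1" "Inl p" "Inl q" s] \<open>y\<^sub>1 \<in> Y\<close> p q \<open>0 < s\<close>
    by simp
  then have "c * c < M (Inr y\<^sub>1) (Inl q) s * M (Inl q) (Inr y\<^sub>2) s"
    using p q fuzzy_metric_sym[OF fm, of "Inl q" "Inr y\<^sub>2" s] \<open>y\<^sub>2 \<in> Y\<close> \<open>0 \<le> c\<close>
    by (intro mult_strict_mono) auto
  also have "\<dots> \<le> M (Inr y\<^sub>1) (Inr y\<^sub>2) s"
    using fm_non_arch_same_time[OF na] \<open>y\<^sub>1 \<in> Y\<close> \<open>y\<^sub>2 \<in> Y\<close> q \<open>0 < s\<close> by blast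
  also have "\<dots> = MY y\<^sub>1 y\<^sub>2 s"
    using adm \<open>y\<^sub>1 \<in> Y\<close> \<open>y\<^sub>2 \<in> Y\<close> \<open>0 < s\<close> by (simp add: fm_admissible_def)
  finally show False
    using \<open>MY y\<^sub>1 y\<^sub>2 s \<le> c * c\<close> by linarith
qed

lemma M_GH_le:
  assumes "0 \<le> c" "\<And>M. fm_admissible X MX Y MY M \<Longrightarrow> fm_hausdorff M (Inl ` X) (Inr ` Y) t \<le> c"
  shows "M_GH X MX Y MY t \<le> c"
  unfolding M_GH_def using assms by (intro cSup_least) auto

lemma not_GH_Cauchy_if_successive_far:
  assumes "0 < t" "0 < \<epsilon>" "\<epsilon> < 1"
    and far: "\<And>k. M_GH (fst (S k)) (snd (S k)) (fst (S (Suc k))) (snd (S (Suc k))) t \<le> 1 - \<epsilon>"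
  shows "\<not> GH_Cauchy S"
proof
  assume "GH_Cauchy S"
  then obtain n\<^sub>0 where "\<forall>n\<ge>n\<^sub>0. \<forall>m\<ge>n\<^sub>0. M_GH (fst (S n)) (snd (S n)) (fst (S m)) (snd (S m)) t > 1 - \<epsilon>"
    using assms(1-3) unfolding GH_Cauchy_def by blast
  then show False
    using far[of n\<^sub>0] by (metis le_Suc_eq linorder_not_le order_refl)
qed

lemma Mn_eq_threshold_fuzzy: "Mn n = threshold_fuzzy (alpha n) (dn n)"
  by (simp add: fun_eq_iff Mn_def threshold_fuzzy_def)

lemma alpha_bounds: "1/3 \<le> alpha n" "alpha n \<le> 1/2"
  by (simp_all add: alpha_def)

lemma Metric_space_Xn: "1 \<le> n \<Longrightarrow> Metric_space (Xn n) (dn n)"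
  by unfold_locales (auto simp: Xn_def dn_def)

lemma dn_ultrametric: "x \<in> Xn n \<Longrightarrow> y \<in> Xn n \<Longrightarrow> z \<in> Xn n \<Longrightarrow> dn n x z \<le> max (dn n x y) (dn n y z)"
  by (auto simp: Xn_def dn_def)

lemma Mn_12_le: "0 < t \<Longrightarrow> t \<le> real n \<Longrightarrow> Mn n 1 2 t = alpha n"
  by (simp add: Mn_def dn_def)

lemma Mn_12_gt: "real n < t \<Longrightarrow> Mn n 1 2 t = 1"
  by (simp add: Mn_def dn_def)

lemma fuzzy_metric_Xn: "1 \<le> n \<Longrightarrow> fuzzy_metric (Xn n) (Mn n)"
  unfolding Mn_eq_threshold_fuzzy using alpha_bounds[of n]
  by (intro Metric_space.fuzzy_metric_threshold_fuzzy Metric_space_Xn) auto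

lemma fm_non_arch_Xn: "fm_non_arch (Xn n) (Mn n)"
  unfolding Mn_eq_threshold_fuzzy using alpha_bounds[of n] dn_ultrametric
  by (intro fm_non_arch_threshold_fuzzy) auto

lemma fm_diam_Xn_ge: "0 < s \<Longrightarrow> 1/3 \<le> fm_diam (Xn n) (Mn n) s"
  unfolding Mn_eq_threshold_fuzzy using alpha_bounds[of n]
  by (intro order.trans[OF _ threshold_fuzzy_diam_ge]) (auto simp: Xn_def)

lemma fm_Cov_Xn_le:
  assumes "1 \<le> n" "0 < \<epsilon>" "0 < t"
  shows "fm_Cov (Xn n) (Mn n) \<epsilon> t \<le> 2"
proof -
  have "fm_Cov (Xn n) (Mn n) \<epsilon> t \<le> enat (card (Xn n))"
    using assms by (intro fm_Cov_le_card fuzzy_metric_Xn) (simp_all add: Xn_def)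
  moreover have "card (Xn n) = 2"
    by (simp add: Xn_def)
  ultimately show ?thesis
    by (simp add: numeral_eq_enat)
qed

lemma Mn_double_index:
  assumes "1 \<le> m" "real m < s" "s < real (2 * m)"
  shows "Mn (2 * m) 1 2 s < Mn m 1 2 s"
    and "Mn (2 * m) 1 2 s / Mn m 1 2 s < Mn (2 * m) 1 2 (1/2) / Mn m 1 2 (1/2)"
proof -
  have "1 \<le> real m" "real (2 * m) = 2 * real m"
    using assms(1) by simp_all
  then have "Mn (2 * m) 1 2 s = alpha (2 * m)" "Mn m 1 2 s = 1"
    and "Mn (2 * m) 1 2 (1/2) = alpha (2 * m)" "Mn m 1 2 (1/2) = alpha m"
    using assms(2,3) by (intro Mn_12_le Mn_12_gt; linarith)+
  moreover have "alpha (2 * m) = 1/2"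
    by (simp add: alpha_def)
  moreover have "0 < alpha m" "alpha m < 1"
    using alpha_bounds[of m] by linarith+
  ultimately show "Mn (2 * m) 1 2 s < Mn m 1 2 s"
    and "Mn (2 * m) 1 2 s / Mn m 1 2 s < Mn (2 * m) 1 2 (1/2) / Mn m 1 2 (1/2)"
    by (simp_all add: field_simps)
qed

lemma M_GH_Xn_le:
  assumes "1 \<le> a" "a < b"
  shows "M_GH (Xn a) (Mn a) (Xn b) (Mn b) 1 \<le> 3/4"
proof (rule M_GH_le)
  fix M assume adm: "fm_admissible (Xn a) (Mn a) (Xn b) (Mn b) M"
  have diam_Xa: "\<forall>p\<in>Xn a. \<forall>q\<in>Xn a. Mn a p q b = 1"
    using assms by (auto simp: Xn_def Mn_def dn_def)
  have "Mn b 1 2 b = alpha b"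
    using assms by (intro Mn_12_le) auto
  with alpha_bounds[of b] have "Mn b 1 2 b \<le> 3/4 * (3/4)"
    by simp
  with adm diam_Xa assms show "fm_hausdorff M (Inl ` Xn a) (Inr ` Xn b) 1 \<le> 3/4"
    by (intro fm_hausdorff_le_of_far_pair[where s = b]) (auto simp: Xn_def)
qed simp

theorem mainTheorem9:
  shows "(\<forall>n\<ge>1. fuzzy_metric (Xn n) (Mn n) \<and> fm_non_arch (Xn n) (Mn n) \<and> fm_compact (Xn n) (Mn n))
   \<and> (let C = (\<lambda>s::real. 1/3::real) in
        \<forall>s>0. \<forall>n\<ge>1. 0 < C s \<and> C s \<le> fm_diam (Xn n) (Mn n) s)
   \<and> (\<forall>t>0. \<forall>\<epsilon>. 0 < \<epsilon> \<and> \<epsilon> < 1 \<longrightarrow> (\<forall>n\<ge>1. fm_Cov (Xn n) (Mn n) \<epsilon> t \<le> 2))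
   \<and> (let t = (1/2::real) in
        \<forall>n m (s::real). 1 \<le> m \<and> n = 2 * m \<and> real m < s \<and> s < real n \<longrightarrow>
          Mn n 1 2 s < Mn m 1 2 s \<and> Mn n 1 2 s / Mn m 1 2 s < Mn n 1 2 t / Mn m 1 2 t)
   \<and> \<not> (\<exists>\<phi>::nat \<Rightarrow> nat. strict_mono \<phi> \<and> (\<forall>k. 1 \<le> \<phi> k) \<and>
          GH_Cauchy (\<lambda>k. (Xn (\<phi> k), Mn (\<phi> k))))"
proof -
  have "\<not> GH_Cauchy (\<lambda>k. (Xn (\<phi> k), Mn (\<phi> k)))"
    if "strict_mono \<phi>" "\<forall>k. 1 \<le> \<phi> k" for \<phi>
    using that M_GH_Xn_le
    by (intro not_GH_Cauchy_if_successive_far[of 1 "1/4"]) (auto simp: strict_mono_Suc_iff)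
  then show ?thesis
    using fuzzy_metric_Xn fm_non_arch_Xn finite_imp_fm_compact[of "Xn _"]
      fm_diam_Xn_ge fm_Cov_Xn_le Mn_double_index
    by (auto simp: Xn_def Let_def)
qed

end
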